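(* Every graph $G$ with $n\geq 3$ vertices that has no $K_5$-minor satisfies $c(G)\leq 8(n-2)$.
   Context: All graphs are finite, simple and undirected. A graph $H$ is a minor of $G$ if $H$ can be obtained from a subgraph of $G$ by contracting edges. A clique of a graph $G$ is a (possibly empty) set of pairwise adjacent vertices; $c(G)$ denotes the number of cliques of $G$ (including the empty clique, all single vertices and all edges). *)

theory Defs
  imports Main
begin

definition simple_graph :: "'a set \<Rightarrow> 'a set set \<Rightarrow> bool" where
  "simple_graph V E \<longleftrightarrow> finite V \<and>
     (\<forall>e\<in>E. \<exists>x y. x \<noteq> y \<and> x \<in> V \<and> y \<in> V \<and> e = {x, y})"

inductive minor_step :: "'a set \<times> 'a set set \<Rightarrow> 'a set \<times> 'a set set \<Rightarrow> bool" where
  del_vertex: "v \<in> V \<Longrightarrow> minor_step (V, E) (V - {v}, {e \<in> E. v \<notin> e})"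
| del_edge: "e \<in> E \<Longrightarrow> minor_step (V, E) (V, E - {e})"
| contract: "{u, v} \<in> E \<Longrightarrow> u \<noteq> v \<Longrightarrow>
    minor_step (V, E) (V - {v}, {e \<in> E. v \<notin> e} \<union> {{u, w} | w. {v, w} \<in> E \<and> w \<noteq> u})"

definition is_minor :: "'a set \<times> 'a set set \<Rightarrow> 'a set \<times> 'a set set \<Rightarrow> bool" where
  "is_minor H G \<longleftrightarrow> minor_step\<^sup>*\<^sup>* G H"

definition has_K5_minor :: "'a set \<Rightarrow> 'a set set \<Rightarrow> bool" where
  "has_K5_minor V E \<longleftrightarrow> (\<exists>V' E'. is_minor (V', E') (V, E) \<and> card V' = 5 \<and>
      (\<forall>x\<in>V'. \<forall>y\<in>V'. x \<noteq> y \<longrightarrow> {x, y} \<in> E'))"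

definition is_clique :: "'a set \<Rightarrow> 'a set set \<Rightarrow> 'a set \<Rightarrow> bool" where
  "is_clique V E S \<longleftrightarrow> S \<subseteq> V \<and> (\<forall>x\<in>S. \<forall>y\<in>S. x \<noteq> y \<longrightarrow> {x, y} \<in> E)"

text \<open>c(G): number of cliques, including the empty clique.\<close>
definition num_cliques :: "'a set \<Rightarrow> 'a set set \<Rightarrow> nat" where
  "num_cliques V E = card {S. is_clique V E S}"

end

theory Submission
  imports Defs
begin

(* Consider a minimal counterexample G, either to the clique bound or to Mader's bound
   |E| \<le> 3n - 6 for K5-minor-free graphs. Deleting an isolated vertex loses one clique and
   no edge; contracting an edge uv whose ends have k common neighbours loses 1 + k edges and
   at most 2 * 2^k cliques. So G has no isolated vertex and every edge of G lies in at least
   three triangles. By Mader's bound G has a vertex v of degree at most 5; as each neighbour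
   of v has three neighbours inside N(v), |N(v)| is 4 or 5 and every vertex of N(v) is
   adjacent to all but at most one other vertex of N(v). Either N(v) contains a K4, which
   forms a K5 together with v, or N(v) = {a, b, c, d, e} misses exactly the pairs ab and cd,
   and contracting bc turns {v, a, b, d, e} into a K5. *)

definition neighbours :: "'a set set \<Rightarrow> 'a \<Rightarrow> 'a set" where
  "neighbours E x = {y. {x, y} \<in> E}"

lemma in_neighbours_iff [simp]: "y \<in> neighbours E x \<longleftrightarrow> {x, y} \<in> E"
  by (simp add: neighbours_def)

lemma simple_graph_edgeE:
  assumes "simple_graph V E" "e \<in> E"
  obtains x y where "x \<noteq> y" "x \<in> V" "y \<in> V" "e = {x, y}"
  using assms unfolding simple_graph_def by blast

lemma simple_graph_edgeD:
  assumes "simple_graph V E" "{x, y} \<in> E"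
  shows "x \<noteq> y" "x \<in> V" "y \<in> V"
  using assms by (auto elim!: simple_graph_edgeE simp: doubleton_eq_iff)

lemma simple_graph_finite: "simple_graph V E \<Longrightarrow> finite V"
  by (simp add: simple_graph_def)

lemma simple_graph_edges_subset: "simple_graph V E \<Longrightarrow> E \<subseteq> {e. e \<subseteq> V \<and> card e = 2}"
  by (auto elim!: simple_graph_edgeE)

lemma simple_graph_finite_edges: "simple_graph V E \<Longrightarrow> finite E"
  using simple_graph_edges_subset simple_graph_finite
  by (metis (no_types, lifting) Collect_mono Pow_def finite_Pow_iff finite_subset)

lemma finite_two_subsets: "finite V \<Longrightarrow> finite {e. e \<subseteq> V \<and> card e = 2}"
  by (rule finite_subset[of _ "Pow V"]) auto

lemma card_edges_le_choose_two:
  assumes "simple_graph V E"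
  shows "card E \<le> card V choose 2"
proof -
  have "card E \<le> card {e. e \<subseteq> V \<and> card e = 2}"
    using assms by (intro card_mono finite_two_subsets simple_graph_edges_subset simple_graph_finite)
  then show ?thesis
    using n_subsets[OF simple_graph_finite[OF assms]] by simp
qed

lemma is_clique_if_card_edges_ge:
  assumes "simple_graph V E" "card V choose 2 \<le> card E"
  shows "is_clique V E V"
proof -
  have "E = {e. e \<subseteq> V \<and> card e = 2}"
  proof (rule card_subset_eq)
    show "finite {e. e \<subseteq> V \<and> card e = 2}"
      using assms(1) by (intro finite_two_subsets simple_graph_finite)
    show "card E = card {e. e \<subseteq> V \<and> card e = 2}"
      using le_antisym[OF card_edges_le_choose_two assms(2)] assms(1)
        n_subsets[OF simple_graph_finite[OF assms(1)]] by simp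
  qed (rule simple_graph_edges_subset[OF assms(1)])
  then show ?thesis by (auto simp: is_clique_def)
qed

lemma neighbours_subset: "simple_graph V E \<Longrightarrow> neighbours E x \<subseteq> V"
  using simple_graph_edgeD(3) by (metis in_neighbours_iff subsetI)

lemma not_in_neighbours: "simple_graph V E \<Longrightarrow> x \<notin> neighbours E x"
  using simple_graph_edgeD(1) by (metis in_neighbours_iff insert_absorb2)

lemma finite_neighbours: "simple_graph V E \<Longrightarrow> finite (neighbours E x)"
  using neighbours_subset simple_graph_finite finite_subset by metis

lemma card_incident_edges:
  assumes "simple_graph V E"
  shows "card {e \<in> E. v \<in> e} = card (neighbours E v)"
proof -
  have incident: "{e \<in> E. v \<in> e} = (\<lambda>w. {v, w}) ` neighbours E v"
  proof (intro equalityI subsetI)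
    fix e assume e: "e \<in> {e \<in> E. v \<in> e}"
    then obtain x y where "e = {x, y}"
      using assms by (auto elim: simple_graph_edgeE)
    with e have "e = {v, if x = v then y else x}" "e \<in> E" by auto
    then show "e \<in> (\<lambda>w. {v, w}) ` neighbours E v" by (intro rev_image_eqI) simp_all
  qed auto
  have "inj_on (\<lambda>w. {v, w}) (neighbours E v)"
    by (rule inj_onI) (auto simp: doubleton_eq_iff)
  then show ?thesis using incident card_image by simp
qed

lemma sum_degrees:
  assumes "simple_graph V E"
  shows "(\<Sum>v\<in>V. card (neighbours E v)) = 2 * card E"
proof -
  have "(\<Sum>v\<in>V. card (neighbours E v)) = (\<Sum>v\<in>V. card {e \<in> E. v \<in> e})"
    using card_incident_edges[OF assms] by simp
  also have "\<dots> = (\<Sum>v\<in>V. \<Sum>e\<in>E. if v \<in> e then 1 else 0)"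
    using simple_graph_finite_edges[OF assms] by (simp add: sum.inter_filter[symmetric])
  also have "\<dots> = (\<Sum>e\<in>E. \<Sum>v\<in>V. if v \<in> e then 1 else 0)"
    by (rule sum.swap)
  also have "\<dots> = (\<Sum>e\<in>E. card {v \<in> V. v \<in> e})"
    using simple_graph_finite[OF assms] by (simp add: sum.inter_filter[symmetric])
  also have "\<dots> = (\<Sum>e\<in>E. 2)"
  proof (rule sum.cong)
    fix e assume "e \<in> E"
    with assms obtain x y where "x \<noteq> y" "x \<in> V" "y \<in> V" "e = {x, y}"
      by (auto elim: simple_graph_edgeE)
    then have "{v \<in> V. v \<in> e} = {x, y}" by auto
    then show "card {v \<in> V. v \<in> e} = 2" using \<open>x \<noteq> y\<close> by simp
  qed simp
  finally show ?thesis by simp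
qed

lemma low_degree_vertex_exists:
  assumes "simple_graph V E" "V \<noteq> {}" "card E < 3 * card V"
  obtains v where "v \<in> V" "card (neighbours E v) \<le> 5"
proof -
  have "\<not> (\<forall>v\<in>V. 6 \<le> card (neighbours E v))"
  proof
    assume "\<forall>v\<in>V. 6 \<le> card (neighbours E v)"
    then have "(\<Sum>v\<in>V. 6) \<le> (\<Sum>v\<in>V. card (neighbours E v))"
      by (intro sum_mono) simp
    then have "6 * card V \<le> 2 * card E"
      using sum_degrees[OF assms(1)] by simp
    then show False using assms(3) by linarith
  qed
  then show ?thesis using that by force
qed

lemma minor_step_has_K5_minor:
  assumes "minor_step (V, E) (V', E')" "has_K5_minor V' E'"
  shows "has_K5_minor V E"
  using assms unfolding has_K5_minor_def is_minor_def
  by (meson converse_rtranclp_into_rtranclp)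

lemma minor_steps_delete_vertices:
  assumes "finite D" "D \<subseteq> V"
  shows "minor_step\<^sup>*\<^sup>* (V, E) (V - D, {e \<in> E. e \<inter> D = {}})"
  using assms
proof (induction D rule: finite_induct)
  case empty
  then show ?case by simp
next
  case (insert x D)
  then have IH: "minor_step\<^sup>*\<^sup>* (V, E) (V - D, {e \<in> E. e \<inter> D = {}})" by simp
  from insert have "minor_step (V - D, {e \<in> E. e \<inter> D = {}})
      (V - D - {x}, {e \<in> {e \<in> E. e \<inter> D = {}}. x \<notin> e})"
    by (intro minor_step.del_vertex) auto
  moreover have "V - D - {x} = V - insert x D"
    and "{e \<in> {e \<in> E. e \<inter> D = {}}. x \<notin> e} = {e \<in> E. e \<inter> insert x D = {}}"
    by auto
  ultimately show ?case
    using rtranclp.rtrancl_into_rtrancl[OF IH] by simp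
qed

lemma has_K5_minor_if_clique:
  assumes "finite V" "is_clique V E W" "card W = 5"
  shows "has_K5_minor V E"
proof -
  have "V - (V - W) = W"
    using assms(2) by (auto simp: is_clique_def)
  then have "is_minor (W, {e \<in> E. e \<inter> (V - W) = {}}) (V, E)"
    using minor_steps_delete_vertices[of "V - W" V E] assms(1) unfolding is_minor_def by auto
  moreover have "\<forall>x\<in>W. \<forall>y\<in>W. x \<noteq> y \<longrightarrow> {x, y} \<in> {e \<in> E. e \<inter> (V - W) = {}}"
    using assms(2) by (auto simp: is_clique_def)
  ultimately show ?thesis
    using assms(3) unfolding has_K5_minor_def by blast
qed

lemma finite_cliques: "finite V \<Longrightarrow> finite {S. is_clique V E S}"
  by (rule finite_subset[of _ "Pow V"]) (auto simp: is_clique_def)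

lemma is_clique_subset: "is_clique V E S \<Longrightarrow> T \<subseteq> S \<Longrightarrow> is_clique V E T"
  by (auto simp: is_clique_def)

lemma is_clique_insert:
  "is_clique V E S \<Longrightarrow> v \<in> V \<Longrightarrow> S \<subseteq> neighbours E v \<Longrightarrow> is_clique V E (insert v S)"
  by (auto simp: is_clique_def insert_commute)

lemma is_clique_remove_subset_neighbours:
  assumes "is_clique V E S" "x \<in> S"
  shows "S - {x} \<subseteq> neighbours E x"
proof
  fix y assume "y \<in> S - {x}"
  then have "x \<noteq> y" "y \<in> S" by auto
  with assms show "y \<in> neighbours E x" unfolding is_clique_def by simp
qed

lemma simple_graph_delete_edge: "simple_graph V E \<Longrightarrow> simple_graph V (E - {e})"
  unfolding simple_graph_def by blast

lemma isolated_vertex_notin_edge: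
  assumes "simple_graph V E" "neighbours E v = {}" "e \<in> E"
  shows "v \<notin> e"
  using assms by (elim simple_graph_edgeE) (auto simp: neighbours_def insert_commute)

lemma minor_step_delete_isolated:
  assumes "simple_graph V E" "neighbours E v = {}" "v \<in> V"
  shows "minor_step (V, E) (V - {v}, E)"
proof -
  have "{e \<in> E. v \<notin> e} = E"
    using isolated_vertex_notin_edge[OF assms(1,2)] by blast
  then show ?thesis using minor_step.del_vertex[OF assms(3), of E] by simp
qed

lemma simple_graph_delete_isolated:
  assumes "simple_graph V E" "neighbours E v = {}"
  shows "simple_graph (V - {v}) E"
  unfolding simple_graph_def
proof (intro conjI ballI)
  show "finite (V - {v})" using simple_graph_finite[OF assms(1)] by simp
  fix e assume e: "e \<in> E"
  with assms(1) obtain x y where "x \<noteq> y" "x \<in> V" "y \<in> V" "e = {x, y}"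
    by (rule simple_graph_edgeE)
  moreover have "v \<notin> e" using isolated_vertex_notin_edge[OF assms e] .
  ultimately show "\<exists>x y. x \<noteq> y \<and> x \<in> V - {v} \<and> y \<in> V - {v} \<and> e = {x, y}" by blast
qed

lemma num_cliques_delete_isolated:
  assumes "simple_graph V E" "neighbours E v = {}"
  shows "num_cliques V E \<le> num_cliques (V - {v}) E + 1"
proof -
  have "S = {v} \<or> is_clique (V - {v}) E S" if "is_clique V E S" for S
  proof (cases "v \<in> S")
    case True
    have "S - {v} \<subseteq> neighbours E v"
      using is_clique_remove_subset_neighbours[OF that True] .
    then show ?thesis using True assms(2) by blast
  next
    case False
    then show ?thesis using that by (auto simp: is_clique_def)
  qed
  then have "{S. is_clique V E S} \<subseteq> insert {v} {S. is_clique (V - {v}) E S}"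
    by blast
  then have "num_cliques V E \<le> card (insert {v} {S. is_clique (V - {v}) E S})"
    unfolding num_cliques_def using simple_graph_finite[OF assms(1)]
    by (intro card_mono finite.insertI finite_cliques) auto
  also have "\<dots> \<le> num_cliques (V - {v}) E + 1"
    unfolding num_cliques_def
    using finite_cliques[OF simple_graph_finite[OF simple_graph_delete_isolated[OF assms]]]
    by (simp add: card_insert_if)
  finally show ?thesis .
qed

definition contract_edges :: "'a set set \<Rightarrow> 'a \<Rightarrow> 'a \<Rightarrow> 'a set set" where
  "contract_edges E u v = {e \<in> E. v \<notin> e} \<union> {{u, w} | w. {v, w} \<in> E \<and> w \<noteq> u}"

lemma minor_step_contract:
  "{u, v} \<in> E \<Longrightarrow> u \<noteq> v \<Longrightarrow> minor_step (V, E) (V - {v}, contract_edges E u v)"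
  unfolding contract_edges_def by (rule minor_step.contract)

lemma simple_graph_contract:
  assumes "simple_graph V E" "{u, v} \<in> E"
  shows "simple_graph (V - {v}) (contract_edges E u v)"
  unfolding simple_graph_def
proof (intro conjI ballI)
  show "finite (V - {v})" using simple_graph_finite[OF assms(1)] by simp
  have uv: "u \<noteq> v" "u \<in> V" using simple_graph_edgeD[OF assms] by auto
  fix e assume "e \<in> contract_edges E u v"
  then consider "e \<in> E" "v \<notin> e" | w where "e = {u, w}" "{v, w} \<in> E" "w \<noteq> u"
    unfolding contract_edges_def by blast
  then show "\<exists>x y. x \<noteq> y \<and> x \<in> V - {v} \<and> y \<in> V - {v} \<and> e = {x, y}"
  proof cases
    case 1
    with assms(1) obtain x y where "x \<noteq> y" "x \<in> V" "y \<in> V" "e = {x, y}"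
      by (elim simple_graph_edgeE)
    moreover have "x \<noteq> v" "y \<noteq> v" using 1(2) \<open>e = {x, y}\<close> by auto
    ultimately show ?thesis by blast
  next
    case 2
    then have "w \<noteq> v" "w \<in> V" using simple_graph_edgeD[OF assms(1) 2(2)] by auto
    then show ?thesis using 2 uv by blast
  qed
qed

lemma card_contract_edges:
  assumes "simple_graph V E" "{u, v} \<in> E"
  shows "card (contract_edges E u v) + card (neighbours E u \<inter> neighbours E v) + 1 = card E"
proof -
  define E\<^sub>0 where "E\<^sub>0 = {e \<in> E. v \<notin> e}"
  define N where "N = (\<lambda>w. {u, w}) ` (neighbours E v - {u})"
  have finite: "finite E" "finite (neighbours E v)"
    using assms(1) by (auto intro: simple_graph_finite_edges finite_neighbours)
  have inj: "inj_on (\<lambda>w. {u, w}) A" for A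
    by (rule inj_onI) (auto simp: doubleton_eq_iff)
  have "u \<in> neighbours E v" using assms(2) by (simp add: insert_commute)
  then have card_N: "card N + 1 = card (neighbours E v)"
    unfolding N_def using card_image[OF inj] card_Suc_Diff1[OF finite(2)] by simp
  have "E = E\<^sub>0 \<union> {e \<in> E. v \<in> e}" "E\<^sub>0 \<inter> {e \<in> E. v \<in> e} = {}"
    unfolding E\<^sub>0_def by auto
  then have card_E: "card E = card E\<^sub>0 + card (neighbours E v)"
    using card_Un_disjoint finite(1) card_incident_edges[OF assms(1)]
    by (metis (no_types, lifting) finite_Un)
  have "E\<^sub>0 \<inter> N = (\<lambda>w. {u, w}) ` (neighbours E u \<inter> neighbours E v)"
  proof (intro equalityI subsetI)
    fix e assume e: "e \<in> E\<^sub>0 \<inter> N"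
    then obtain w where w: "w \<in> neighbours E v" "e = {u, w}"
      unfolding N_def by blast
    with e have "w \<in> neighbours E u" unfolding E\<^sub>0_def by simp
    with w show "e \<in> (\<lambda>w. {u, w}) ` (neighbours E u \<inter> neighbours E v)" by blast
  next
    fix e assume "e \<in> (\<lambda>w. {u, w}) ` (neighbours E u \<inter> neighbours E v)"
    then obtain w where w: "e = {u, w}" "w \<in> neighbours E u" "w \<in> neighbours E v" by blast
    then have "w \<noteq> u" "w \<noteq> v" "u \<noteq> v"
      using not_in_neighbours[OF assms(1)] simple_graph_edgeD(1)[OF assms] by auto
    then show "e \<in> E\<^sub>0 \<inter> N" using w unfolding E\<^sub>0_def N_def by auto
  qed
  then have "card (E\<^sub>0 \<inter> N) = card (neighbours E u \<inter> neighbours E v)"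
    using card_image[OF inj] by simp
  moreover have "card E\<^sub>0 + card N = card (E\<^sub>0 \<union> N) + card (E\<^sub>0 \<inter> N)"
    using finite unfolding E\<^sub>0_def N_def by (intro card_Un_Int) simp_all
  moreover have "contract_edges E u v = E\<^sub>0 \<union> N"
    unfolding contract_edges_def E\<^sub>0_def N_def by auto
  ultimately show ?thesis using card_N card_E by simp
qed

lemma is_clique_contract_edges:
  assumes "W \<subseteq> V - {v}" "is_clique V E (W - {u})"
    and "\<And>y. u \<in> W \<Longrightarrow> y \<in> W - {u} \<Longrightarrow> {u, y} \<in> E \<or> {v, y} \<in> E"
  shows "is_clique (V - {v}) (contract_edges E u v) W"
  unfolding is_clique_def
proof (intro conjI ballI impI)
  show "W \<subseteq> V - {v}" by fact
  have to_u: "{u, y} \<in> contract_edges E u v" if "u \<in> W" "y \<in> W - {u}" for y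
  proof -
    have "v \<notin> {u, y}" using assms(1) that by auto
    then show ?thesis using assms(3)[OF that] that(2) unfolding contract_edges_def by auto
  qed
  fix x y assume xy: "x \<in> W" "y \<in> W" "x \<noteq> y"
  consider "x = u" | "y = u" | "x \<noteq> u" "y \<noteq> u" by blast
  then show "{x, y} \<in> contract_edges E u v"
  proof cases
    case 1
    then show ?thesis using to_u xy by simp
  next
    case 2
    then show ?thesis using to_u[of x] xy by (simp add: insert_commute)
  next
    case 3
    then have "{x, y} \<in> E" using assms(2) xy unfolding is_clique_def by simp
    moreover have "v \<notin> {x, y}" using assms(1) xy by auto
    ultimately show ?thesis unfolding contract_edges_def by simp
  qed
qed

lemma card_cliques_containing_le:
  assumes "finite (neighbours E u \<inter> neighbours E v)"
  shows "card {S. is_clique V E S \<and> u \<in> S \<and> v \<in> S}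
           \<le> 2 ^ card (neighbours E u \<inter> neighbours E v)"
proof -
  let ?C = "neighbours E u \<inter> neighbours E v"
  have "{S. is_clique V E S \<and> u \<in> S \<and> v \<in> S} \<subseteq> (\<lambda>X. insert u (insert v X)) ` Pow ?C"
  proof
    fix S assume S: "S \<in> {S. is_clique V E S \<and> u \<in> S \<and> v \<in> S}"
    then have "S - {u, v} \<subseteq> ?C"
      using is_clique_remove_subset_neighbours[of V E S] by blast
    moreover have "S = insert u (insert v (S - {u, v}))" using S by auto
    ultimately show "S \<in> (\<lambda>X. insert u (insert v X)) ` Pow ?C" by blast
  qed
  then have "card {S. is_clique V E S \<and> u \<in> S \<and> v \<in> S} \<le> card (Pow ?C)"
    using assms by (meson card_image_le card_mono finite_Pow_iff finite_imageI le_trans)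
  then show ?thesis using card_Pow assms by metis
qed

lemma is_clique_contract_edges_avoiding:
  assumes "is_clique V E S" "v \<notin> S"
  shows "is_clique (V - {v}) (contract_edges E u v) S"
proof (rule is_clique_contract_edges)
  show "S \<subseteq> V - {v}" using assms by (auto simp: is_clique_def)
  show "is_clique V E (S - {u})" using assms(1) by (rule is_clique_subset) auto
  show "{u, y} \<in> E \<or> {v, y} \<in> E" if "u \<in> S" "y \<in> S - {u}" for y
    using is_clique_remove_subset_neighbours[OF assms(1) that(1)] that(2) by auto
qed

lemma is_clique_contract_edges_merge:
  assumes "is_clique V E S" "v \<in> S" "u \<in> V" "u \<noteq> v"
  shows "is_clique (V - {v}) (contract_edges E u v) (insert u (S - {v}))"
proof (rule is_clique_contract_edges)
  show "insert u (S - {v}) \<subseteq> V - {v}" using assms by (auto simp: is_clique_def)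
  show "is_clique V E (insert u (S - {v}) - {u})" using assms(1) by (rule is_clique_subset) auto
  show "{u, y} \<in> E \<or> {v, y} \<in> E" if "y \<in> insert u (S - {v}) - {u}" for y
    using is_clique_remove_subset_neighbours[OF assms(1,2)] that by auto
qed

lemma merged_clique_subset_common_neighbours:
  assumes "is_clique V E S" "v \<in> S" "u \<notin> S" "is_clique V E (insert u (S - {v}))"
  shows "S - {v} \<subseteq> neighbours E u \<inter> neighbours E v"
  using is_clique_remove_subset_neighbours[OF assms(4)] is_clique_remove_subset_neighbours[OF assms(1,2)]
    assms(3) by auto

(* Cliques avoiding v survive the contraction, and S \<mapsto> insert u (S - {v}) maps the cliques
   through v but not u injectively to cliques of the contraction; the two families can only
   collide in sets insert u X with X a set of common neighbours of u and v. *)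
lemma card_cliques_not_containing_edge_le:
  assumes "simple_graph V E" "{u, v} \<in> E"
  shows "card {S. is_clique V E S \<and> \<not> (u \<in> S \<and> v \<in> S)}
           \<le> num_cliques (V - {v}) (contract_edges E u v) + 2 ^ card (neighbours E u \<inter> neighbours E v)"
proof -
  define C where "C = neighbours E u \<inter> neighbours E v"
  define A where "A = {S. is_clique V E S \<and> v \<notin> S}"
  define B where "B = {S. is_clique V E S \<and> v \<in> S \<and> u \<notin> S}"
  define CL where "CL = {S. is_clique (V - {v}) (contract_edges E u v) S}"
  define merge where "merge S = insert u (S - {v})" for S
  have uv: "u \<noteq> v" "u \<in> V" using simple_graph_edgeD[OF assms] by auto
  have "finite V" using simple_graph_finite[OF assms(1)] .
  then have finite: "finite A" "finite B" "finite CL" "finite C"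
    using finite_cliques[of V E] finite_neighbours[OF assms(1)] unfolding A_def B_def CL_def C_def
    by (auto intro: rev_finite_subset finite_cliques)
  have "A \<subseteq> CL"
    unfolding A_def CL_def by (auto intro: is_clique_contract_edges_avoiding)
  moreover have "merge ` B \<subseteq> CL"
  proof
    fix T assume "T \<in> merge ` B"
    then obtain S where "S \<in> B" "T = merge S" by blast
    then show "T \<in> CL"
      unfolding B_def CL_def merge_def by (auto intro: is_clique_contract_edges_merge[OF _ _ uv(2,1)])
  qed
  ultimately have card_union: "card (A \<union> merge ` B) \<le> card CL"
    using finite(3) by (intro card_mono) auto
  have "A \<inter> merge ` B \<subseteq> insert u ` Pow C"
  proof
    fix T assume "T \<in> A \<inter> merge ` B"
    then obtain S where "S \<in> B" "T = insert u (S - {v})" "is_clique V E T"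
      unfolding A_def merge_def by blast
    then show "T \<in> insert u ` Pow C"
      unfolding B_def C_def using merged_clique_subset_common_neighbours[of V E S v u] by blast
  qed
  then have "card (A \<inter> merge ` B) \<le> card (insert u ` Pow C)"
    using finite(4) by (intro card_mono) auto
  also have "\<dots> \<le> 2 ^ card C"
    using card_image_le[of "Pow C" "insert u"] card_Pow[of C] finite(4) by simp
  finally have card_inter: "card (A \<inter> merge ` B) \<le> 2 ^ card C" .
  have "inj_on merge B"
    by (rule inj_on_inverseI[where g = "\<lambda>T. insert v (T - {u})"]) (auto simp: B_def merge_def)
  then have "card A + card B = card (A \<union> merge ` B) + card (A \<inter> merge ` B)"
    using card_image[of merge B] card_Un_Int[of A "merge ` B"] finite by simp
  moreover have "{S. is_clique V E S \<and> \<not> (u \<in> S \<and> v \<in> S)} = A \<union> B" "A \<inter> B = {}"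
    unfolding A_def B_def by auto
  ultimately show ?thesis
    unfolding num_cliques_def CL_def[symmetric] C_def[symmetric]
    using card_union card_inter card_Un_disjoint[OF finite(1,2)] by simp
qed

lemma num_cliques_contract:
  assumes "simple_graph V E" "{u, v} \<in> E"
  shows "num_cliques V E
           \<le> num_cliques (V - {v}) (contract_edges E u v) + 2 * 2 ^ card (neighbours E u \<inter> neighbours E v)"
proof -
  have "{S. is_clique V E S}
      = {S. is_clique V E S \<and> \<not> (u \<in> S \<and> v \<in> S)} \<union> {S. is_clique V E S \<and> u \<in> S \<and> v \<in> S}"
    by auto
  then have "num_cliques V E
      \<le> card {S. is_clique V E S \<and> \<not> (u \<in> S \<and> v \<in> S)} + card {S. is_clique V E S \<and> u \<in> S \<and> v \<in> S}"
    unfolding num_cliques_def by (metis card_Un_le)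
  then show ?thesis
    using card_cliques_not_containing_edge_le[OF assms] card_cliques_containing_le[of E u v V]
      finite_neighbours[OF assms(1)]
    by simp
qed

lemma has_K5_minor_if_contract_to_clique:
  assumes "simple_graph V E" "{u, v} \<in> E" "W \<subseteq> V - {v}" "card W = 5"
    and "is_clique V E (W - {u})" "\<And>y. u \<in> W \<Longrightarrow> y \<in> W - {u} \<Longrightarrow> {u, y} \<in> E \<or> {v, y} \<in> E"
  shows "has_K5_minor V E"
proof -
  have "is_clique (V - {v}) (contract_edges E u v) W"
    using assms(3,5,6) by (rule is_clique_contract_edges)
  then have "has_K5_minor (V - {v}) (contract_edges E u v)"
    using simple_graph_finite[OF simple_graph_contract[OF assms(1,2)]] assms(4)
    by (intro has_K5_minor_if_clique)
  then show ?thesis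
    using minor_step_contract[OF assms(2) simple_graph_edgeD(1)[OF assms(1,2)]]
    by (rule minor_step_has_K5_minor[rotated])
qed

lemma has_K5_minor_if_clique_in_neighbours:
  assumes "simple_graph V E" "v \<in> V" "W \<subseteq> neighbours E v" "is_clique V E W" "card W = 4"
  shows "has_K5_minor V E"
proof (rule has_K5_minor_if_clique)
  show "is_clique V E (insert v W)" using assms(4,2,3) by (rule is_clique_insert)
  have "v \<notin> W" using assms(3) not_in_neighbours[OF assms(1)] by (meson subsetD)
  moreover have "finite W" using assms(5) by (intro card_ge_0_finite) simp
  ultimately show "card (insert v W) = 5" using assms(5) by simp
qed (rule simple_graph_finite[OF assms(1)])

lemma card_non_neighbours_in_neighbourhood:
  assumes "simple_graph V E" "x \<in> neighbours E v" "3 \<le> card (neighbours E v \<inter> neighbours E x)"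
  shows "card (neighbours E v - insert x (neighbours E x)) + 4 \<le> card (neighbours E v)"
proof -
  let ?N = "neighbours E v"
  have "finite ?N" using finite_neighbours[OF assms(1)] .
  have "?N - {x} = (?N \<inter> neighbours E x) \<union> (?N - insert x (neighbours E x))"
    using not_in_neighbours[OF assms(1), of x] by auto
  then have "card (?N - {x}) = card (?N \<inter> neighbours E x) + card (?N - insert x (neighbours E x))"
    using \<open>finite ?N\<close> by (simp only:) (rule card_Un_disjoint; auto)
  moreover have "card (?N - {x}) + 1 = card ?N"
    using card_Suc_Diff1[OF \<open>finite ?N\<close> assms(2)] by simp
  ultimately show ?thesis using assms(3) by linarith
qed

(* Contracting c into b supplies the missing edge ab through ac. *)
lemma has_K5_minor_by_contracting_in_neighbourhood:
  assumes "simple_graph V E" "v \<in> V" "{a, b, c, d, e} \<subseteq> neighbours E v" "distinct [a, b, c, d, e]"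
    and "{a, c} \<in> E" "{a, d} \<in> E" "{a, e} \<in> E" "{b, c} \<in> E" "{b, d} \<in> E" "{b, e} \<in> E" "{d, e} \<in> E"
  shows "has_K5_minor V E"
proof (rule has_K5_minor_if_contract_to_clique[where u = b and v = c and W = "{v, a, b, d, e}"])
  have v: "v \<notin> {a, b, c, d, e}" using assms(3) not_in_neighbours[OF assms(1)] by (meson subsetD)
  have V: "{a, b, c, d, e} \<subseteq> V" using assms(3) neighbours_subset[OF assms(1)] by (rule order_trans)
  with v show "{v, a, b, d, e} \<subseteq> V - {c}" "card {v, a, b, d, e} = 5"
    using assms(2,4) by auto
  show "is_clique V E ({v, a, b, d, e} - {b})"
    using assms V by (auto simp: is_clique_def insert_commute)
  show "{b, y} \<in> E \<or> {c, y} \<in> E" if "y \<in> {v, a, b, d, e} - {b}" for y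
    using that assms by (auto simp: insert_commute)
qed (use assms in auto)

lemma has_K5_minor_if_five_neighbours_missing_matching:
  assumes sg: "simple_graph V E" and v: "v \<in> V" "card (neighbours E v) = 5"
    and adjacent: "\<And>x y z. x \<in> neighbours E v \<Longrightarrow> y \<in> neighbours E v \<Longrightarrow> z \<in> neighbours E v
      \<Longrightarrow> x \<noteq> y \<Longrightarrow> y \<noteq> z \<Longrightarrow> z \<noteq> x \<Longrightarrow> {x, z} \<notin> E \<Longrightarrow> {x, y} \<in> E"
  shows "has_K5_minor V E"
proof (cases "\<exists>b\<in>neighbours E v. is_clique V E (neighbours E v - {b})")
  case True
  then obtain b where "b \<in> neighbours E v" "is_clique V E (neighbours E v - {b})" by blast
  moreover have "card (neighbours E v - {b}) = 4"
    using \<open>b \<in> neighbours E v\<close> v(2) finite_neighbours[OF sg] by simp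
  ultimately show ?thesis
    using has_K5_minor_if_clique_in_neighbours[OF sg v(1)] by blast
next
  case False
  define N where "N = neighbours E v"
  have non_edge: "\<exists>x\<in>N - {b}. \<exists>y\<in>N - {b}. x \<noteq> y \<and> {x, y} \<notin> E" if "b \<in> N" for b
    using False that neighbours_subset[OF sg] unfolding N_def is_clique_def by blast
  have "N \<noteq> {}" using v(2) unfolding N_def by force
  then obtain x\<^sub>0 where "x\<^sub>0 \<in> N" by blast
  then obtain a b where ab: "a \<in> N" "b \<in> N" "a \<noteq> b" "{a, b} \<notin> E"
    using non_edge by blast
  obtain c d where cd: "c \<in> N" "d \<in> N" "c \<noteq> b" "d \<noteq> b" "c \<noteq> d" "{c, d} \<notin> E"
    using non_edge[OF ab(2)] by blast
  have "c \<noteq> a" using adjacent[of a d b] ab cd unfolding N_def by auto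
  moreover have "d \<noteq> a" using adjacent[of a c b] ab cd unfolding N_def by (auto simp: insert_commute)
  ultimately have "card (N - {a, b, c, d}) = 1"
    using v(2) finite_neighbours[OF sg] ab cd unfolding N_def by (simp add: card_Diff_subset)
  then obtain e where e: "e \<in> N" "e \<notin> {a, b, c, d}" by (metis card_1_singletonE Diff_iff insertI1)
  show ?thesis
  proof (rule has_K5_minor_by_contracting_in_neighbourhood[OF sg v(1)])
    show "{a, b, c, d, e} \<subseteq> neighbours E v" using ab cd e unfolding N_def by auto
    show "distinct [a, b, c, d, e]" using ab cd e \<open>c \<noteq> a\<close> \<open>d \<noteq> a\<close> by auto
    have "{b, a} \<notin> E" "{d, c} \<notin> E" using ab cd by (simp_all add: insert_commute)
    note config = ab cd e \<open>c \<noteq> a\<close> \<open>d \<noteq> a\<close> this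
    show "{a, c} \<in> E" using adjacent[of a c b] config unfolding N_def by auto
    show "{a, d} \<in> E" using adjacent[of a d b] config unfolding N_def by auto
    show "{a, e} \<in> E" using adjacent[of a e b] config unfolding N_def by auto
    show "{b, c} \<in> E" using adjacent[of b c a] config unfolding N_def by auto
    show "{b, d} \<in> E" using adjacent[of b d a] config unfolding N_def by auto
    show "{b, e} \<in> E" using adjacent[of b e a] config unfolding N_def by auto
    show "{d, e} \<in> E" using adjacent[of d e c] config unfolding N_def by auto
  qed
qed

lemma has_K5_minor_if_low_degree:
  assumes sg: "simple_graph V E" and v: "v \<in> V" "neighbours E v \<noteq> {}" "card (neighbours E v) \<le> 5"
    and triangles: "\<And>x. x \<in> neighbours E v \<Longrightarrow> 3 \<le> card (neighbours E v \<inter> neighbours E x)"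
  shows "has_K5_minor V E"
proof -
  define N where "N = neighbours E v"
  have N: "finite N" "N \<subseteq> V"
    unfolding N_def using finite_neighbours[OF sg] neighbours_subset[OF sg] by auto
  have few: "card (N - insert x (neighbours E x)) + 4 \<le> card N" if "x \<in> N" for x
    using card_non_neighbours_in_neighbourhood[OF sg _ triangles] that unfolding N_def by blast
  obtain x\<^sub>0 where "x\<^sub>0 \<in> N" using v(2) unfolding N_def by blast
  then have "4 \<le> card N" using few by fastforce
  then consider "card N = 4" | "card N = 5" using v(3) unfolding N_def by linarith
  then show ?thesis
  proof cases
    case 1
    have "is_clique V E N"
      unfolding is_clique_def
    proof (intro conjI ballI impI)
      fix x y assume xy: "x \<in> N" "y \<in> N" "x \<noteq> y"
      have "N - insert x (neighbours E x) = {}"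
        using few[OF xy(1)] 1 N(1) by simp
      with xy show "{x, y} \<in> E" by auto
    qed (rule N(2))
    then show ?thesis
      using has_K5_minor_if_clique_in_neighbours[OF sg v(1)] 1 unfolding N_def by blast
  next
    case 2
    have "{x, y} \<in> E"
      if "x \<in> N" "y \<in> N" "z \<in> N" "x \<noteq> y" "y \<noteq> z" "z \<noteq> x" "{x, z} \<notin> E" for x y z
    proof (rule ccontr)
      assume "{x, y} \<notin> E"
      with that have "y \<in> N - insert x (neighbours E x)" "z \<in> N - insert x (neighbours E x)" by auto
      then show False
        using few[OF that(1)] 2 N(1) card_le_Suc0_iff_eq[of "N - insert x (neighbours E x)"] that(5)
        by auto
    qed
    then show ?thesis
      using has_K5_minor_if_five_neighbours_missing_matching[OF sg v(1)] 2 unfolding N_def by blast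
  qed
qed

lemma has_K5_minor_if_edges_in_triangles:
  assumes "simple_graph V E" "V \<noteq> {}" "card E < 3 * card V"
    and "\<And>v. v \<in> V \<Longrightarrow> neighbours E v \<noteq> {}"
    and "\<And>x y. {x, y} \<in> E \<Longrightarrow> 3 \<le> card (neighbours E x \<inter> neighbours E y)"
  shows "has_K5_minor V E"
proof -
  obtain v where "v \<in> V" "card (neighbours E v) \<le> 5"
    using low_degree_vertex_exists[OF assms(1-3)] .
  then show ?thesis
    using has_K5_minor_if_low_degree[OF assms(1)] assms(4,5) by simp
qed

lemma card_edges_small_K5_minor_free:
  assumes "simple_graph V E" "\<not> has_K5_minor V E" "3 \<le> card V" "card V \<le> 5"
  shows "card E + 6 \<le> 3 * card V"
proof -
  have five: "card E < card V choose 2" if "card V = 5"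
  proof (rule ccontr)
    assume "\<not> card E < card V choose 2"
    then have "is_clique V E V" using is_clique_if_card_edges_ge[OF assms(1)] by simp
    then show False
      using has_K5_minor_if_clique[OF simple_graph_finite[OF assms(1)] _ that] assms(2) by blast
  qed
  consider "card V = 3" | "card V = 4" | "card V = 5" using assms(3,4) by linarith
  then show ?thesis using card_edges_le_choose_two[OF assms(1)] five by cases (simp_all add: choose_two)
qed

lemma card_edges_K5_minor_free_step:
  assumes sg: "simple_graph V E" and free: "\<not> has_K5_minor V E" and large: "6 \<le> card V"
    and IH: "\<And>V' E'. simple_graph V' E' \<Longrightarrow> minor_step (V, E) (V', E') \<Longrightarrow> 3 \<le> card V'
      \<Longrightarrow> card V' + card E' < card V + card E \<Longrightarrow> card E' + 6 \<le> 3 * card V'"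
  shows "card E + 6 \<le> 3 * card V"
proof (rule ccontr)
  assume bad: "\<not> card E + 6 \<le> 3 * card V"
  have finite: "finite V" "finite E"
    using sg by (auto intro: simple_graph_finite simple_graph_finite_edges)
  have exact: "card E + 5 = 3 * card V"
  proof (rule ccontr)
    assume "card E + 5 \<noteq> 3 * card V"
    with bad have more: "3 * card V + 1 < card E + 6" by linarith
    then obtain e where e: "e \<in> E" using large by fastforce
    have "card (E - {e}) + 6 \<le> 3 * card V"
      using e finite(2) card_Diff1_less[OF finite(2) e] large
      by (intro IH simple_graph_delete_edge[OF sg] minor_step.del_edge) auto
    then show False using more e finite(2) by simp
  qed
  have triangles: "3 \<le> card (neighbours E x \<inter> neighbours E y)" if xy: "{x, y} \<in> E" for x y
  proof (rule ccontr)
    assume few: "\<not> 3 \<le> card (neighbours E x \<inter> neighbours E y)"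
    have "x \<noteq> y" "y \<in> V" using simple_graph_edgeD[OF sg xy] by auto
    then have V: "card (V - {y}) + 1 = card V" using card_Suc_Diff1[OF finite(1)] by simp
    then have "card (contract_edges E x y) + 6 \<le> 3 * card (V - {y})"
      using card_contract_edges[OF sg xy] large
      by (intro IH simple_graph_contract[OF sg xy] minor_step_contract[OF xy \<open>x \<noteq> y\<close>]) auto
    then show False using card_contract_edges[OF sg xy] few exact V by linarith
  qed
  have isolated: "neighbours E v \<noteq> {}" if "v \<in> V" for v
  proof
    assume "neighbours E v = {}"
    then have "card E + 6 \<le> 3 * card (V - {v})"
      using that large finite(1)
      by (intro IH simple_graph_delete_isolated[OF sg] minor_step_delete_isolated[OF sg]) auto
    then show False using exact that finite(1) by simp
  qed
  have "has_K5_minor V E"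
    using large exact triangles isolated by (intro has_K5_minor_if_edges_in_triangles[OF sg]) auto
  with free show False ..
qed

lemma card_edges_K5_minor_free:
  assumes "simple_graph V E" "\<not> has_K5_minor V E" "3 \<le> card V"
  shows "card E + 6 \<le> 3 * card V"
  using assms
proof (induction "card V + card E" arbitrary: V E rule: less_induct)
  case less
  show ?case
  proof (cases "card V \<le> 5")
    case True
    then show ?thesis using card_edges_small_K5_minor_free less.prems by blast
  next
    case False
    show ?thesis
    proof (rule card_edges_K5_minor_free_step[OF less.prems(1,2)])
      show "6 \<le> card V" using False by simp
      fix V' E' assume sg': "simple_graph V' E'" and step: "minor_step (V, E) (V', E')"
        and "3 \<le> card V'" and smaller: "card V' + card E' < card V + card E"
      have "\<not> has_K5_minor V' E'" using minor_step_has_K5_minor[OF step] less.prems(2) by blast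
      then show "card E' + 6 \<le> 3 * card V'" using less.hyps[OF smaller sg'] \<open>3 \<le> card V'\<close> by simp
    qed
  qed
qed

lemma num_cliques_le_power: "finite V \<Longrightarrow> num_cliques V E \<le> 2 ^ card V"
  unfolding num_cliques_def by (metis card_Pow card_mono finite_Pow_iff is_clique_def mem_Collect_eq
    subsetI PowI)

lemma num_cliques_K5_minor_free_step:
  assumes sg: "simple_graph V E" and free: "\<not> has_K5_minor V E" and large: "4 \<le> card V"
    and IH: "\<And>V' E'. simple_graph V' E' \<Longrightarrow> minor_step (V, E) (V', E') \<Longrightarrow> card V' + 1 = card V
      \<Longrightarrow> num_cliques V' E' \<le> 8 * (card V' - 2)"
  shows "num_cliques V E \<le> 8 * (card V - 2)"
proof (rule ccontr)
  assume bad: "\<not> num_cliques V E \<le> 8 * (card V - 2)"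
  have finite: "finite V" using simple_graph_finite[OF sg] .
  have triangles: "3 \<le> card (neighbours E x \<inter> neighbours E y)" if xy: "{x, y} \<in> E" for x y
  proof (rule ccontr)
    assume "\<not> 3 \<le> card (neighbours E x \<inter> neighbours E y)"
    then have few: "2 ^ card (neighbours E x \<inter> neighbours E y) \<le> (4::nat)"
      using power_increasing[of _ 2 "2::nat"] by simp
    have "x \<noteq> y" "y \<in> V" using simple_graph_edgeD[OF sg xy] by auto
    then have V: "card (V - {y}) + 1 = card V" using card_Suc_Diff1[OF finite] by simp
    then have "num_cliques (V - {y}) (contract_edges E x y) \<le> 8 * (card (V - {y}) - 2)"
      by (intro IH simple_graph_contract[OF sg xy] minor_step_contract[OF xy \<open>x \<noteq> y\<close>])
    then show False using num_cliques_contract[OF sg xy] few bad large V by linarith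
  qed
  have isolated: "neighbours E v \<noteq> {}" if "v \<in> V" for v
  proof
    assume "neighbours E v = {}"
    moreover have "card (V - {v}) + 1 = card V" using card_Suc_Diff1[OF finite \<open>v \<in> V\<close>] by simp
    ultimately have "num_cliques (V - {v}) E \<le> 8 * (card (V - {v}) - 2)"
      using that by (intro IH simple_graph_delete_isolated[OF sg] minor_step_delete_isolated[OF sg])
    then show False using num_cliques_delete_isolated[OF sg \<open>neighbours E v = {}\<close>] bad large
      \<open>card (V - {v}) + 1 = card V\<close> by linarith
  qed
  have "card E < 3 * card V"
    using card_edges_K5_minor_free[OF sg free] large by linarith
  then have "has_K5_minor V E"
    using large triangles isolated by (intro has_K5_minor_if_edges_in_triangles[OF sg]) auto
  with free show False ..
qed

theorem theorem6:
  fixes V :: "'a set" and E :: "'a set set"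
  assumes "simple_graph V E" and "card V \<ge> 3" and "\<not> has_K5_minor V E"
  shows "num_cliques V E \<le> 8 * (card V - 2)"
  using assms
proof (induction "card V" arbitrary: V E rule: less_induct)
  case less
  show ?case
  proof (cases "card V = 3")
    case True
    then show ?thesis using num_cliques_le_power[OF simple_graph_finite[OF less.prems(1)]] by simp
  next
    case False
    show ?thesis
    proof (rule num_cliques_K5_minor_free_step[OF less.prems(1,3)])
      show "4 \<le> card V" using False less.prems(2) by simp
      fix V' E' assume sg': "simple_graph V' E'" and step: "minor_step (V, E) (V', E')"
        and smaller: "card V' + 1 = card V"
      have "\<not> has_K5_minor V' E'" using minor_step_has_K5_minor[OF step] less.prems(3) by blast
      then show "num_cliques V' E' \<le> 8 * (card V' - 2)"
        using less.hyps[of V' E'] sg' smaller \<open>4 \<le> card V\<close> by simp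
    qed
  qed
qed

end
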